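(* Let $G=(V,E)$ be a finite graph, $\varepsilon$ an orientation of $G$, $q$ a positive integer, and $f_1,f_2\in F(G,\varepsilon;q)$. If $f_1(e)\equiv f_2(e)\pmod q$ for all $e\in E$, then the orientations $\varepsilon_{f_1}$ and $\varepsilon_{f_2}$ are Eulerian equivalent.
   Context: An orientation assigns each edge (including loops) one of its two directions; $\varepsilon(v,e)=1$ ($-1$) if non-loop $e$ points out of (into) end-vertex $v$, $0$ otherwise. $F(G,\varepsilon;q)=\{f:E\to\mathbb R: \sum_e m_{v,e}f(e)=0\ \forall v,\ |f(e)|<q\ \forall e\}$, where $m_{v,e}=\varepsilon(v,e)$ for non-loops and $0$ for loops (real $q$-flows). For $f:E\to\mathbb R$, $\varepsilon_f$ is the orientation that agrees with $\varepsilon$ on edges $e$ with $f(e)>0$ and is opposite to $\varepsilon$ on edges with $f(e)\le0$. Two orientations are Eulerian equivalent if the spanning subgraph formed by the edges on which they differ is directed Eulerian (in-degree equals out-degree at every vertex, a loop contributing one of each) with respect to either of them. *)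

theory Defs
  imports Main "HOL-Library.Disjoint_Sets" Complex_Main
begin

text \<open>A finite graph (multigraph, loops allowed) is given by a vertex set V, an edge set E and a
  map ends assigning to each edge its (unordered, here listed in a reference order) pair of
  end-vertices.
  An orientation is a map eps :: 'e => bool choosing one of the two directions of each edge:
  eps e = True means e points from fst (ends e) to snd (ends e), False means the opposite.
  (Loops also have two distinct orientations.)\<close>

definition finite_graph :: "'v set \<Rightarrow> 'e set \<Rightarrow> ('e \<Rightarrow> 'v \<times> 'v) \<Rightarrow> bool" where
  "finite_graph V E ends \<longleftrightarrow> finite V \<and> finite E \<and> (\<forall>e\<in>E. fst (ends e) \<in> V \<and> snd (ends e) \<in> V)"

definition is_loop :: "('e \<Rightarrow> 'v \<times> 'v) \<Rightarrow> 'e \<Rightarrow> bool" where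
  "is_loop ends e \<longleftrightarrow> fst (ends e) = snd (ends e)"

definition tail :: "('e \<Rightarrow> 'v \<times> 'v) \<Rightarrow> ('e \<Rightarrow> bool) \<Rightarrow> 'e \<Rightarrow> 'v" where
  "tail ends eps e = (if eps e then fst (ends e) else snd (ends e))"

definition head :: "('e \<Rightarrow> 'v \<times> 'v) \<Rightarrow> ('e \<Rightarrow> bool) \<Rightarrow> 'e \<Rightarrow> 'v" where
  "head ends eps e = (if eps e then snd (ends e) else fst (ends e))"

definition incid :: "('e \<Rightarrow> 'v \<times> 'v) \<Rightarrow> ('e \<Rightarrow> bool) \<Rightarrow> 'v \<Rightarrow> 'e \<Rightarrow> real" where
  "incid ends eps v e =
     (if is_loop ends e then 0
      else if tail ends eps e = v then 1
      else if head ends eps e = v then -1 else 0)"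

definition qflows :: "'v set \<Rightarrow> 'e set \<Rightarrow> ('e \<Rightarrow> 'v \<times> 'v) \<Rightarrow> ('e \<Rightarrow> bool) \<Rightarrow> real \<Rightarrow> ('e \<Rightarrow> real) set" where
  "qflows V E ends eps q =
     {f. (\<forall>v\<in>V. (\<Sum>e\<in>E. incid ends eps v e * f e) = 0) \<and> (\<forall>e\<in>E. \<bar>f e\<bar> < q)}"

definition orient_of :: "('e \<Rightarrow> bool) \<Rightarrow> ('e \<Rightarrow> real) \<Rightarrow> 'e \<Rightarrow> bool" where
  "orient_of eps f e = (if f e > 0 then eps e else \<not> eps e)"

definition directed_eulerian :: "'v set \<Rightarrow> 'e set \<Rightarrow> ('e \<Rightarrow> 'v \<times> 'v) \<Rightarrow> ('e \<Rightarrow> bool) \<Rightarrow> bool" where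
  "directed_eulerian V D ends eps \<longleftrightarrow>
     (\<forall>v\<in>V. card {e\<in>D. tail ends eps e = v} = card {e\<in>D. head ends eps e = v})"

definition eulerian_equivalent :: "'v set \<Rightarrow> 'e set \<Rightarrow> ('e \<Rightarrow> 'v \<times> 'v) \<Rightarrow> ('e \<Rightarrow> bool) \<Rightarrow> ('e \<Rightarrow> bool) \<Rightarrow> bool" where
  "eulerian_equivalent V E ends eps1 eps2 \<longleftrightarrow>
     directed_eulerian V {e\<in>E. eps1 e \<noteq> eps2 e} ends eps1"

end

theory Submission
  imports Defs
begin

text \<open>The difference h = (f1 - f2) / q is again a circulation for eps. Since both flows lie
  strictly between -q and q, h takes values in {-1, 0, 1}, it vanishes exactly where
  eps_f1 and eps_f2 agree, and elsewhere it is the sign of f1. Reorienting the support of h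
  by eps_f1 therefore turns h into the all-ones circulation on the edges where the two
  orientations differ, and conservation of that circulation says in-degree = out-degree.\<close>

lemma incid_eq_tail_minus_head:
  "incid ends eps v e =
     (if tail ends eps e = v then 1 else 0) - (if head ends eps e = v then 1 else 0)"
  by (auto simp: incid_def tail_def head_def is_loop_def)

lemma incid_orient_of:
  "incid ends (orient_of eps f) v e = (if f e > 0 then 1 else -1) * incid ends eps v e"
  by (auto simp: incid_def tail_def head_def is_loop_def orient_of_def)

lemma orient_of_eq_iff:
  "orient_of eps f1 e = orient_of eps f2 e \<longleftrightarrow> (f1 e > 0 \<longleftrightarrow> f2 e > 0)"
  by (auto simp: orient_of_def)

lemma diff_of_congruent_below_modulus:
  fixes a b q :: real and k :: int
  assumes "q > 0" "\<bar>a\<bar> < q" "\<bar>b\<bar> < q" "a - b = of_int k * q"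
  shows "a - b = (if (a > 0) = (b > 0) then 0 else if a > 0 then q else - q)"
proof -
  have "\<bar>of_int k\<bar> * q < 2 * q"
    using assms by (metis abs_mult abs_of_pos abs_triangle_ineq4 mult_2 add_strict_mono
        order_le_less_trans)
  then have "\<bar>of_int k\<bar> < (2::real)" using \<open>q > 0\<close> by simp
  then have "k = 0 \<or> k = 1 \<or> k = -1" by linarith
  then show ?thesis using assms by auto
qed

lemma directed_eulerian_iff_incid_sum:
  assumes "finite D"
  shows "directed_eulerian V D ends eps \<longleftrightarrow> (\<forall>v\<in>V. (\<Sum>e\<in>D. incid ends eps v e) = 0)"
proof -
  have "(\<Sum>e\<in>D. incid ends eps v e) =
      real (card {e\<in>D. tail ends eps e = v}) - real (card {e\<in>D. head ends eps e = v})" for v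
    using assms by (simp add: incid_eq_tail_minus_head sum_subtractf sum.If_cases Int_def
        conj_commute)
  then show ?thesis by (simp add: directed_eulerian_def)
qed

lemma qflows_diff_conserved:
  assumes "f1 \<in> qflows V E ends eps q" "f2 \<in> qflows V E ends eps q" "v \<in> V"
  shows "(\<Sum>e\<in>E. incid ends eps v e * (f1 e - f2 e)) = 0"
  using assms by (simp add: qflows_def right_diff_distrib sum_subtractf)

theorem lemma5p3:
  fixes V :: "'v set" and E :: "'e set" and ends :: "'e \<Rightarrow> 'v \<times> 'v"
    and eps :: "'e \<Rightarrow> bool" and q :: nat and f1 f2 :: "'e \<Rightarrow> real"
  assumes "finite_graph V E ends"
    and "q > 0"
    and "f1 \<in> qflows V E ends eps (real q)"
    and "f2 \<in> qflows V E ends eps (real q)"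
    and "\<forall>e\<in>E. \<exists>k::int. f1 e - f2 e = real_of_int k * real q"
  shows "eulerian_equivalent V E ends (orient_of eps f1) (orient_of eps f2)"
proof -
  define D where "D = {e\<in>E. orient_of eps f1 e \<noteq> orient_of eps f2 e}"
  have "finite E" using assms(1) by (simp add: finite_graph_def)
  have edge_term: "incid ends eps v e * (f1 e - f2 e) =
      (if e \<in> D then q * incid ends (orient_of eps f1) v e else 0)" if "e \<in> E" for v e
  proof -
    obtain k where k: "f1 e - f2 e = of_int k * real q" using assms(5) \<open>e \<in> E\<close> by blast
    have "f1 e - f2 e = (if (f1 e > 0) = (f2 e > 0) then 0 else if f1 e > 0 then q else - q)"
      using diff_of_congruent_below_modulus[OF _ _ _ k] assms(2-4) \<open>e \<in> E\<close>
      by (simp add: qflows_def)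
    then show ?thesis
      using \<open>e \<in> E\<close> by (simp add: D_def orient_of_eq_iff incid_orient_of)
  qed
  have "(\<Sum>e\<in>D. incid ends (orient_of eps f1) v e) = 0" if "v \<in> V" for v
  proof -
    have "0 = (\<Sum>e\<in>E. incid ends eps v e * (f1 e - f2 e))"
      using qflows_diff_conserved assms(3,4) that by metis
    also have "\<dots> = (\<Sum>e\<in>E. if e \<in> D then q * incid ends (orient_of eps f1) v e else 0)"
      using edge_term by simp
    also have "\<dots> = q * (\<Sum>e\<in>D. incid ends (orient_of eps f1) v e)"
      using \<open>finite E\<close> by (simp add: sum.If_cases D_def Int_def sum_distrib_left)
    finally show ?thesis using assms(2) by simp
  qed
  moreover have "finite D" using \<open>finite E\<close> by (simp add: D_def)
  ultimately show ?thesis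
    unfolding eulerian_equivalent_def D_def[symmetric]
    by (simp add: directed_eulerian_iff_incid_sum)
qed

end
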